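(* Let $X=\{x_1,\dots,x_n\}$ and $Z=\{z_1,\dots,z_n\}$ be sets equipped with symmetric non-negative functions $d_X\colon X\times X\to\mathbb{R}^+$ and $d_Z\colon Z\times Z\to\mathbb{R}^+$, and let $f_\bullet\colon X\to Z$ be the bijection $x_i\mapsto z_i$. Then for all $a,b\in\mathbb{R}^+$, \[ \sum_{b'\in\mathbb{R}^+}\mathcal{M}^0_f(a,b')=m^X(a)\qquad\text{and}\qquad\sum_{a'\in\mathbb{R}^+}\mathcal{M}^0_f(a',b)=m^Z(b). \]
   Context: $\mathbb{R}^+=[0,\infty)$; the functions $d_X,d_Z$ may vanish on distinct points and need not satisfy the triangle inequality. For a finite set $Y=\{y_1,\dots,y_n\}$ with symmetric non-negative $d_Y$ and $r\ge 0$, let $G_r(Y)$ be the graph on $Y$ with an edge $[y,y']$ ($y\ne y'$) whenever $d_Y(y,y')\le r$ (for $r>0$ this is the Vietoris–Rips graph $\mathrm{VR}_r(Y)$; $\mathrm{VR}_0(Y)$ has no edges). $H_0(\mathrm{VR}_0(Y))$ is the $\mathbb{Z}_2$-vector space with basis $[y_1],\dots,[y_n]$. For $b\ge0$, $\ker^+_b(Y)$ is the span of all $[y]+[y']$ with $y,y'$ in the same connected component of $G_b(Y)$; $\ker^-_0(Y)=0$ and for $b>0$, $\ker^-_b(Y)$ is the span of all $[y]+[y']$ with $y,y'$ in the same component of $G_r(Y)$ for some $0\le r<b$. For $j\in\{2,\dots,n\}$ the death value $b_j$ of $y_j$ is the least $r\ge0$ such that $y_j$ is in the same component of $G_r(Y)$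 as some $y_i$ with $i<j$; for $a\ge 0$, $m^Y(a)$ is the number of $j\in\{2,\dots,n\}$ with $b_j=a$. $f_0\colon H_0(\mathrm{VR}_0(X))\to H_0(\mathrm{VR}_0(Z))$ is the linear isomorphism $[x_i]\mapsto[z_i]$, and \[ \mathcal{M}^0_f(a,b)=\dim\frac{f_0(\ker^+_a(X))\cap\ker^+_b(Z)}{f_0(\ker^-_a(X))\cap\ker^+_b(Z)+f_0(\ker^+_a(X))\cap\ker^-_b(Z)},\quad a,b\in\mathbb{R}^+. \] (Only finitely many terms of each sum are nonzero.) *)

theory Defs
  imports Complex_Main "HOL-Library.Z2" "HOL-Library.Function_Algebras"
begin

text \<open>Points of X (resp. Z) are indexed by 1..n; the bijection x_i -> z_i is the
identity on indices.
H_0(VR_0(Y)) over Z_2 is modelled by functions nat => bit (the chains supported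
on 1..n form the relevant finite-dimensional subspace); the basis vector [y_i] is
the indicator of i. The induced map f_0 is the identity on this representation.\<close>

type_synonym chain = "nat \<Rightarrow> bit"

definition scaleZ2 :: "bit \<Rightarrow> chain \<Rightarrow> chain" where
  "scaleZ2 c v = (\<lambda>i. c * v i)"

definition spanZ2 :: "chain set \<Rightarrow> chain set" where
  "spanZ2 S = module.span scaleZ2 S"

definition dimZ2 :: "chain set \<Rightarrow> nat" where
  "dimZ2 S = vector_space.dim scaleZ2 S"

definition gen :: "nat \<Rightarrow> chain" where
  "gen i = (\<lambda>j. if j = i then 1 else 0)"

definition edge :: "nat \<Rightarrow> (nat \<Rightarrow> nat \<Rightarrow> real) \<Rightarrow> real \<Rightarrow> nat \<Rightarrow> nat \<Rightarrow> bool" where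
  "edge n d r i j \<longleftrightarrow> i \<in> {1..n} \<and> j \<in> {1..n} \<and> i \<noteq> j \<and> d i j \<le> r"

definition samecomp :: "nat \<Rightarrow> (nat \<Rightarrow> nat \<Rightarrow> real) \<Rightarrow> real \<Rightarrow> nat \<Rightarrow> nat \<Rightarrow> bool" where
  "samecomp n d r i j \<longleftrightarrow> i \<in> {1..n} \<and> j \<in> {1..n} \<and> (edge n d r)\<^sup>*\<^sup>* i j"

definition ker_plus :: "nat \<Rightarrow> (nat \<Rightarrow> nat \<Rightarrow> real) \<Rightarrow> real \<Rightarrow> chain set" where
  "ker_plus n d b = spanZ2 {gen i + gen j | i j. samecomp n d b i j}"

definition ker_minus :: "nat \<Rightarrow> (nat \<Rightarrow> nat \<Rightarrow> real) \<Rightarrow> real \<Rightarrow> chain set" where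
  "ker_minus n d b = (if b = 0 then {0}
     else spanZ2 {gen i + gen j | i j. \<exists>r. 0 \<le> r \<and> r < b \<and> samecomp n d r i j})"

text \<open>Dimension of the quotient N / D for subspaces D \<subseteq> N (finite-dimensional):
  dim (N/D) = dim N - dim D.\<close>
definition quot_dim :: "chain set \<Rightarrow> chain set \<Rightarrow> nat" where
  "quot_dim N D = dimZ2 N - dimZ2 D"

definition M0 :: "nat \<Rightarrow> (nat \<Rightarrow> nat \<Rightarrow> real) \<Rightarrow> (nat \<Rightarrow> nat \<Rightarrow> real) \<Rightarrow> real \<Rightarrow> real \<Rightarrow> nat" where
  "M0 n dX dZ a b = quot_dim (ker_plus n dX a \<inter> ker_plus n dZ b)
      (spanZ2 ((ker_minus n dX a \<inter> ker_plus n dZ b) \<union> (ker_plus n dX a \<inter> ker_minus n dZ b)))"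

definition death :: "nat \<Rightarrow> (nat \<Rightarrow> nat \<Rightarrow> real) \<Rightarrow> nat \<Rightarrow> real" where
  "death n d j = (LEAST r. 0 \<le> r \<and> (\<exists>i. 1 \<le> i \<and> i < j \<and> samecomp n d r j i))"

definition mult :: "nat \<Rightarrow> (nat \<Rightarrow> nat \<Rightarrow> real) \<Rightarrow> real \<Rightarrow> nat" where
  "mult n d a = card {j \<in> {2..n}. death n d j = a}"

end

theory Submission
  imports Defs
begin

(* Over Z_2 a finite subspace V has exactly 2 ^ dim V elements, so counting the fibres of
   (u, w) |-> u + w on U \<times> W gives Grassmann's formula
   dim (U + W) + dim (U \<inter> W) = dim U + dim W. With K+ = ker+_a(X), K- = ker-_a(X),
   L+ = ker+_b(Z) and L- = ker-_b(Z) it turns M(a, b) into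
     [dim (K+ \<inter> L+) - dim (K+ \<inter> L-)] - [dim (K- \<inter> L+) - dim (K- \<inter> L-)].
   The graphs G_r(Z) only change at the finitely many critical values of d_Z (0 and the
   values d_Z(z_i, z_j)), and at a critical value b > 0 the space L- is L+ at the preceding
   critical value, while L- = 0 at b = 0. Hence, for fixed a, the sum over b telescopes
   to dim K+ - dim K-.
   Finally ker+_r has the triangular basis [y_j] + [y_c(j)], c(j) the least index in the
   component of y_j, indexed by the j with c(j) < j, i.e. by the points whose death value
   is at most r; so dim K+ - dim K- = m^X(a). The column sums follow by exchanging the
   roles of X and Z. *)

section \<open>Vector spaces over Z_2\<close>

interpretation chain: vector_space scaleZ2
  by unfold_locales (auto simp: scaleZ2_def fun_eq_iff algebra_simps)

lemma chain_add_self [simp]: "(x::chain) + x = 0"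
  by (simp add: fun_eq_iff)

lemma chain_two_mult [simp]: "2 * (x::chain) = 0"
  by (simp add: mult_2)

lemma chain_diff_eq_add [simp]: "(x::chain) - y = x + y"
  by (simp add: fun_eq_iff)

lemma bit_add_eq_iff: "(a::bit) + b = c \<longleftrightarrow> a = b + c"
  by (cases a; cases b; cases c) simp_all

lemma chain_add_eq_iff: "(x::chain) + y = z \<longleftrightarrow> x = y + z"
  by (simp add: fun_eq_iff bit_add_eq_iff del: add_bit_eq_xor)

lemma scaleZ2_bit_cases: "scaleZ2 c v = (if c = 0 then 0 else v)"
  by (cases c) (simp_all add: scaleZ2_def fun_eq_iff)

lemma span_insert_chain:
  "chain.span (insert b B) = chain.span B \<union> (\<lambda>v. b + v) ` chain.span B"
proof -
  have "x \<in> chain.span (insert b B) \<longleftrightarrow> x \<in> chain.span B \<or> x + b \<in> chain.span B" for x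
    unfolding chain.span_insert by (auto simp: scaleZ2_bit_cases)
  moreover have "x + b \<in> chain.span B \<longleftrightarrow> x \<in> (\<lambda>v. b + v) ` chain.span B" for x
    by (auto simp: image_iff) (metis chain_add_eq_iff)+
  ultimately show ?thesis by blast
qed

lemma card_span_independent:
  assumes "finite B" "chain.independent B"
  shows "card (chain.span B) = 2 ^ card B"
  using assms
proof (induction B rule: finite_induct)
  case empty
  then show ?case by simp
next
  case (insert b B)
  then have indep: "chain.independent B" and b: "b \<notin> chain.span B"
    by (simp_all add: chain.independent_insert)
  have fin: "finite (chain.span B)"
    using insert.IH[OF indep] card.infinite by fastforce
  have "chain.span B \<inter> (\<lambda>v. b + v) ` chain.span B = {}"
    using b chain.span_add[of "b + _" B] by fastforce
  then have "card (chain.span (insert b B)) = card (chain.span B) + card ((\<lambda>v. b + v) ` chain.span B)"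
    unfolding span_insert_chain using fin by (simp add: card_Un_disjoint)
  also have "\<dots> = 2 * card (chain.span B)"
    by (simp add: card_image inj_on_def)
  finally show ?case
    using insert.IH[OF indep] insert.hyps by simp
qed

lemma card_subspace:
  assumes "finite V" "chain.subspace V"
  shows "card V = 2 ^ chain.dim V"
proof -
  obtain B where B: "B \<subseteq> V" "chain.independent B" "V \<subseteq> chain.span B" "card B = chain.dim V"
    using chain.basis_exists by blast
  then have "chain.span B = V"
    using assms(2) by (simp add: chain.span_subspace)
  then show ?thesis
    using card_span_independent[of B] B assms(1) finite_subset by metis
qed

lemma dim_subset_finite_subspace:
  assumes "finite W" "chain.subspace W" "V \<subseteq> W"
  shows "chain.dim V \<le> chain.dim W"
proof -
  obtain B where B: "B \<subseteq> W" "chain.independent B" "W \<subseteq> chain.span B" "card B = chain.dim W"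
    using chain.basis_exists by blast
  have "finite B"
    using B(1) assms(1) finite_subset by blast
  moreover have "V \<subseteq> chain.span B"
    using assms(3) B(3) by blast
  ultimately show ?thesis
    using chain.dim_le_card B(4) by metis
qed

lemma card_fibre_sum_subspaces:
  assumes "chain.subspace U" "chain.subspace W" "u0 \<in> U" "w0 \<in> W"
  shows "card {p \<in> U \<times> W. fst p + snd p = u0 + w0} = card (U \<inter> W)"
proof -
  have "{p \<in> U \<times> W. fst p + snd p = u0 + w0} = (\<lambda>k. (u0 + k, w0 + k)) ` (U \<inter> W)"
  proof (intro set_eqI iffI)
    fix p assume "p \<in> {p \<in> U \<times> W. fst p + snd p = u0 + w0}"
    then obtain u w where p: "p = (u, w)" "u \<in> U" "w \<in> W" "u + w = u0 + w0"
      by auto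
    then have k: "u0 + u = w0 + w"
      by (metis add.assoc add.commute chain_add_eq_iff)
    have "u0 + u \<in> U \<inter> W"
      using assms p k by (metis IntI chain.subspace_add)
    moreover have "p = (u0 + (u0 + u), w0 + (w0 + w))"
      using p(1) by (simp add: add.assoc[symmetric])
    ultimately show "p \<in> (\<lambda>k. (u0 + k, w0 + k)) ` (U \<inter> W)"
      unfolding k by blast
  next
    fix p assume "p \<in> (\<lambda>k. (u0 + k, w0 + k)) ` (U \<inter> W)"
    then show "p \<in> {p \<in> U \<times> W. fst p + snd p = u0 + w0}"
      using assms by (auto simp: chain.subspace_add add_ac)
  qed
  moreover have "inj_on (\<lambda>k. (u0 + k, w0 + k)) (U \<inter> W)"
    by (rule inj_onI) simp
  ultimately show ?thesis
    by (simp add: card_image)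
qed

lemma dim_span_Un_Int:
  assumes "finite U" "finite W" "chain.subspace U" "chain.subspace W"
  shows "chain.dim (chain.span (U \<union> W)) + chain.dim (U \<inter> W) = chain.dim U + chain.dim W"
proof -
  let ?sum = "\<lambda>p. fst p + snd p"
  have spans: "chain.span U = U" "chain.span W = W"
    using assms by simp_all
  have span: "chain.span (U \<union> W) = ?sum ` (U \<times> W)"
    unfolding chain.span_Un spans by (auto simp: image_def)
  have fin: "finite (chain.span (U \<union> W))"
    using assms by (simp add: span)
  have "card U * card W = (\<Sum>p\<in>U \<times> W. 1)"
    by (simp add: card_cartesian_product)
  also have "\<dots> = (\<Sum>s\<in>?sum ` (U \<times> W). card {p \<in> U \<times> W. ?sum p = s})"
    using assms by (subst sum.image_gen[of _ _ ?sum]) simp_all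
  also have "\<dots> = (\<Sum>s\<in>?sum ` (U \<times> W). card (U \<inter> W))"
    using assms by (intro sum.cong) (auto simp: card_fibre_sum_subspaces)
  also have "\<dots> = card (chain.span (U \<union> W)) * card (U \<inter> W)"
    unfolding span by simp
  moreover have "card (chain.span (U \<union> W)) = 2 ^ chain.dim (chain.span (U \<union> W))"
    using fin by (rule card_subspace) simp
  ultimately have "(2::nat) ^ (chain.dim U + chain.dim W)
      = 2 ^ (chain.dim (chain.span (U \<union> W)) + chain.dim (U \<inter> W))"
    using assms by (simp add: card_subspace chain.subspace_inter power_add)
  then show ?thesis
    by simp
qed

lemma dim_singleton_zero [simp]: "chain.dim {0} = 0"
  using chain.dim_span_eq_card_independent[OF chain.independent_empty] by simp

lemma independent_triangular:
  fixes b :: "nat \<Rightarrow> chain"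
  assumes "finite J" "\<And>j. j \<in> J \<Longrightarrow> b j j = 1"
    and "\<And>j k. j \<in> J \<Longrightarrow> k \<in> J \<Longrightarrow> j < k \<Longrightarrow> b j k = 0"
  shows "inj_on b J \<and> chain.independent (b ` J)"
  using assms
proof (induction J rule: finite_linorder_max_induct)
  case empty
  then show ?case by (simp add: chain.independent_empty)
next
  case (insert m J)
  have "chain.span (b ` J) \<subseteq> {v. v m = 0}"
    using insert.hyps(2) insert.prems(2)
    by (intro chain.span_minimal) (auto simp: chain.subspace_def scaleZ2_def)
  moreover have "b m m = 1"
    using insert.prems(1) by simp
  ultimately have "b m \<notin> chain.span (b ` J)"
    by auto
  then show ?case
    using insert.IH insert.prems chain.span_base
    by (auto simp: chain.independent_insert inj_on_insert)
qed

lemma spanZ2_eq_span: "spanZ2 = chain.span"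
  by (simp add: fun_eq_iff spanZ2_def)

lemma dimZ2_eq_dim: "dimZ2 = chain.dim"
  by (simp add: fun_eq_iff dimZ2_def)

lemma quot_dim_span_Un_Int:
  assumes "finite A" "chain.subspace A" "chain.subspace A'" "chain.subspace B" "chain.subspace B'"
    and "A' \<subseteq> A" "B' \<subseteq> B"
  shows "int (quot_dim (A \<inter> B) (spanZ2 ((A' \<inter> B) \<union> (A \<inter> B'))))
    = (int (chain.dim (A \<inter> B)) - int (chain.dim (A \<inter> B')))
      - (int (chain.dim (A' \<inter> B)) - int (chain.dim (A' \<inter> B')))"
proof -
  have fin: "finite (A' \<inter> B)" "finite (A \<inter> B')" "finite (A \<inter> B)"
    using assms(1,6) finite_subset by blast+
  have sub: "chain.subspace (A' \<inter> B)" "chain.subspace (A \<inter> B')" "chain.subspace (A \<inter> B)"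
    using assms(2-5) by (simp_all add: chain.subspace_inter)
  have "(A' \<inter> B) \<inter> (A \<inter> B') = A' \<inter> B'"
    using assms(6,7) by blast
  then have grassmann: "chain.dim (chain.span ((A' \<inter> B) \<union> (A \<inter> B'))) + chain.dim (A' \<inter> B')
      = chain.dim (A' \<inter> B) + chain.dim (A \<inter> B')"
    using dim_span_Un_Int[OF fin(1,2) sub(1,2)] by simp
  have "chain.span ((A' \<inter> B) \<union> (A \<inter> B')) \<subseteq> A \<inter> B"
    using assms(6,7) sub(3) by (intro chain.span_minimal) auto
  then have "chain.dim (chain.span ((A' \<inter> B) \<union> (A \<inter> B'))) \<le> chain.dim (A \<inter> B)"
    using fin(3) sub(3) by (rule dim_subset_finite_subspace[rotated 2])
  with grassmann show ?thesis
    unfolding quot_dim_def dimZ2_eq_dim spanZ2_eq_span by linarith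
qed

section \<open>Components of the threshold graphs\<close>

definition dist_sym :: "nat \<Rightarrow> (nat \<Rightarrow> nat \<Rightarrow> real) \<Rightarrow> bool" where
  "dist_sym n d \<longleftrightarrow> (\<forall>i \<in> {1..n}. \<forall>j \<in> {1..n}. d i j = d j i)"

definition dist_nonneg :: "nat \<Rightarrow> (nat \<Rightarrow> nat \<Rightarrow> real) \<Rightarrow> bool" where
  "dist_nonneg n d \<longleftrightarrow> (\<forall>i \<in> {1..n}. \<forall>j \<in> {1..n}. 0 \<le> d i j)"

lemma samecomp_refl: "i \<in> {1..n} \<Longrightarrow> samecomp n d r i i"
  by (simp add: samecomp_def)

lemma samecomp_trans: "samecomp n d r i j \<Longrightarrow> samecomp n d r j k \<Longrightarrow> samecomp n d r i k"
  by (auto simp: samecomp_def)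

lemma samecomp_sym:
  assumes "dist_sym n d"
    and "samecomp n d r i j"
  shows "samecomp n d r j i"
proof -
  have "(edge n d r)\<inverse>\<inverse> = edge n d r"
    using assms(1) by (auto simp: edge_def fun_eq_iff dist_sym_def)
  then show ?thesis
    using assms(2) unfolding samecomp_def by (metis rtranclp_converseI)
qed

lemma samecomp_mono: "r \<le> r' \<Longrightarrow> samecomp n d r i j \<Longrightarrow> samecomp n d r' i j"
  unfolding samecomp_def
  by (auto elim!: rtranclp_mono[THEN predicate2D, rotated] simp: edge_def)

lemma samecomp_of_le:
  "i \<in> {1..n} \<Longrightarrow> j \<in> {1..n} \<Longrightarrow> d i j \<le> r \<Longrightarrow> samecomp n d r i j"
  by (cases "i = j") (auto simp: samecomp_def edge_def)

definition comp_min :: "nat \<Rightarrow> (nat \<Rightarrow> nat \<Rightarrow> real) \<Rightarrow> real \<Rightarrow> nat \<Rightarrow> nat" where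
  "comp_min n d r j = (LEAST k. samecomp n d r j k)"

definition dead :: "nat \<Rightarrow> (nat \<Rightarrow> nat \<Rightarrow> real) \<Rightarrow> real \<Rightarrow> nat set" where
  "dead n d r = {j \<in> {2..n}. \<exists>i. 1 \<le> i \<and> i < j \<and> samecomp n d r j i}"

lemma samecomp_comp_min: "j \<in> {1..n} \<Longrightarrow> samecomp n d r j (comp_min n d r j)"
  unfolding comp_min_def by (rule LeastI[OF samecomp_refl])

lemma comp_min_le: "j \<in> {1..n} \<Longrightarrow> comp_min n d r j \<le> j"
  unfolding comp_min_def by (rule Least_le[OF samecomp_refl])

lemma comp_min_eq:
  assumes "dist_sym n d"
    and "samecomp n d r i j"
  shows "comp_min n d r i = comp_min n d r j"
proof -
  have "samecomp n d r i k \<longleftrightarrow> samecomp n d r j k" for k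
    using samecomp_sym[OF assms] samecomp_trans assms(2) by blast
  then have "samecomp n d r i = samecomp n d r j"
    by blast
  then show ?thesis
    by (simp add: comp_min_def)
qed

lemma dead_iff_comp_min_less: "j \<in> dead n d r \<longleftrightarrow> j \<in> {1..n} \<and> comp_min n d r j < j"
proof
  assume "j \<in> dead n d r"
  then obtain i where "j \<in> {2..n}" "i < j" "samecomp n d r j i"
    by (auto simp: dead_def)
  then show "j \<in> {1..n} \<and> comp_min n d r j < j"
    unfolding comp_min_def by (auto intro: Least_le[THEN le_less_trans])
next
  assume "j \<in> {1..n} \<and> comp_min n d r j < j"
  moreover have "samecomp n d r j (comp_min n d r j)"
    using calculation samecomp_comp_min by blast
  ultimately show "j \<in> dead n d r"
    unfolding dead_def by (auto simp: samecomp_def)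
qed

lemma dead_mono: "r \<le> r' \<Longrightarrow> dead n d r \<subseteq> dead n d r'"
  unfolding dead_def by (blast intro: samecomp_mono)

lemma finite_dead: "finite (dead n d r)"
  by (simp add: dead_def)

lemma subspace_ker_plus: "chain.subspace (ker_plus n d r)"
  by (simp add: ker_plus_def spanZ2_eq_span chain.subspace_span)

lemma subspace_ker_minus: "chain.subspace (ker_minus n d r)"
  by (simp add: ker_minus_def spanZ2_eq_span chain.subspace_span chain.subspace_0)

lemma finite_ker_plus: "finite (ker_plus n d r)"
proof -
  let ?C = "{v :: chain. \<forall>i. i \<notin> {1..n} \<longrightarrow> v i = 0}"
  have "chain.subspace ?C"
    by (simp add: chain.subspace_def scaleZ2_def)
  then have "ker_plus n d r \<subseteq> ?C"
    unfolding ker_plus_def spanZ2_eq_span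
    by (rule chain.span_minimal[rotated]) (auto simp: samecomp_def gen_def)
  moreover have "finite ?C"
    by (rule finite_subset[OF _ finite_set_of_finite_funs[of "{1..n}" "{0, 1}" 0]]) auto
  ultimately show ?thesis
    by (rule finite_subset)
qed

lemma ker_plus_mono: "r \<le> r' \<Longrightarrow> ker_plus n d r \<subseteq> ker_plus n d r'"
  unfolding ker_plus_def spanZ2_eq_span by (intro chain.span_mono) (blast intro: samecomp_mono)

lemma ker_plus_eq_span_dead:
  assumes "dist_sym n d"
  shows "ker_plus n d r = chain.span ((\<lambda>j. gen j + gen (comp_min n d r j)) ` dead n d r)"
    (is "_ = chain.span ?B")
  unfolding ker_plus_def spanZ2_eq_span chain.span_eq
proof safe
  fix i j assume ij: "samecomp n d r i j"
  have "gen k + gen (comp_min n d r k) \<in> chain.span ?B" if "k \<in> {1..n}" for k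
  proof (cases "k \<in> dead n d r")
    case True
    then show ?thesis by (auto intro: chain.span_base)
  next
    case False
    then have "comp_min n d r k = k"
      using that comp_min_le[OF that, of d r] unfolding dead_iff_comp_min_less by linarith
    then show ?thesis by (simp add: chain.span_zero)
  qed
  moreover have "i \<in> {1..n}" "j \<in> {1..n}"
    using ij by (auto simp: samecomp_def)
  ultimately have "(gen i + gen (comp_min n d r i)) + (gen j + gen (comp_min n d r j)) \<in> chain.span ?B"
    by (blast intro: chain.span_add)
  then show "gen i + gen j \<in> chain.span ?B"
    using comp_min_eq[OF assms ij] by (simp add: add_ac)
next
  fix j assume "j \<in> dead n d r"
  then have "samecomp n d r j (comp_min n d r j)"
    by (simp add: dead_iff_comp_min_less samecomp_comp_min)
  then show "gen j + gen (comp_min n d r j) \<in> chain.span {gen i + gen j |i j. samecomp n d r i j}"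
    by (blast intro: chain.span_base)
qed

lemma dim_ker_plus:
  assumes "dist_sym n d"
  shows "chain.dim (ker_plus n d r) = card (dead n d r)"
proof -
  let ?b = "\<lambda>j. gen j + gen (comp_min n d r j)"
  have "inj_on ?b (dead n d r) \<and> chain.independent (?b ` dead n d r)"
    by (rule independent_triangular) (simp_all add: finite_dead dead_iff_comp_min_less gen_def)
  then have "chain.dim (chain.span (?b ` dead n d r)) = card (dead n d r)"
    by (metis chain.dim_span_eq_card_independent card_image)
  then show ?thesis
    by (simp only: ker_plus_eq_span_dead[OF assms])
qed

section \<open>Critical values\<close>

definition crit :: "nat \<Rightarrow> (nat \<Rightarrow> nat \<Rightarrow> real) \<Rightarrow> real set" where
  "crit n d = insert 0 ((\<lambda>(i, j). d i j) ` ({1..n} \<times> {1..n}))"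

definition crit_floor :: "nat \<Rightarrow> (nat \<Rightarrow> nat \<Rightarrow> real) \<Rightarrow> real \<Rightarrow> real" where
  "crit_floor n d r = Max {s \<in> crit n d. s \<le> r}"

definition crit_pred :: "nat \<Rightarrow> (nat \<Rightarrow> nat \<Rightarrow> real) \<Rightarrow> real \<Rightarrow> real" where
  "crit_pred n d a = Max {s \<in> crit n d. s < a}"

lemma finite_crit [simp]: "finite (crit n d)"
  by (simp add: crit_def)

lemma zero_in_crit [simp]: "0 \<in> crit n d"
  by (simp add: crit_def)

lemma dist_in_crit: "i \<in> {1..n} \<Longrightarrow> j \<in> {1..n} \<Longrightarrow> d i j \<in> crit n d"
  unfolding crit_def by (auto intro!: image_eqI[where x = "(i, j)"])

lemma crit_nonneg: "dist_nonneg n d \<Longrightarrow> s \<in> crit n d \<Longrightarrow> 0 \<le> s"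
  by (auto simp: crit_def dist_nonneg_def)

lemma crit_floor:
  assumes "0 \<le> r"
  shows "crit_floor n d r \<in> crit n d" "crit_floor n d r \<le> r"
    and "s \<in> crit n d \<Longrightarrow> s \<le> r \<Longrightarrow> s \<le> crit_floor n d r"
proof -
  have "crit_floor n d r \<in> {s \<in> crit n d. s \<le> r}"
    unfolding crit_floor_def using assms by (intro Max_in) (auto intro!: exI[of _ 0])
  then show "crit_floor n d r \<in> crit n d" "crit_floor n d r \<le> r"
    by simp_all
  show "s \<in> crit n d \<Longrightarrow> s \<le> r \<Longrightarrow> s \<le> crit_floor n d r"
    by (simp add: crit_floor_def)
qed

lemma crit_pred:
  assumes "0 < a"
  shows "crit_pred n d a \<in> crit n d" "crit_pred n d a < a" "0 \<le> crit_pred n d a"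
    and "s \<in> crit n d \<Longrightarrow> s < a \<Longrightarrow> s \<le> crit_pred n d a"
proof -
  have "crit_pred n d a \<in> {s \<in> crit n d. s < a}"
    unfolding crit_pred_def using assms by (intro Max_in) (auto intro!: exI[of _ 0])
  then show "crit_pred n d a \<in> crit n d" "crit_pred n d a < a"
    by simp_all
  show "0 \<le> crit_pred n d a"
    using assms by (simp add: crit_pred_def)
  show "s \<in> crit n d \<Longrightarrow> s < a \<Longrightarrow> s \<le> crit_pred n d a"
    by (simp add: crit_pred_def)
qed

lemma samecomp_crit_floor: "0 \<le> r \<Longrightarrow> samecomp n d (crit_floor n d r) = samecomp n d r"
proof -
  assume "0 \<le> r"
  then have "edge n d (crit_floor n d r) = edge n d r"
    using crit_floor[OF \<open>0 \<le> r\<close>, where n = n and d = d] dist_in_crit[where n = n and d = d]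
    by (force simp: edge_def fun_eq_iff)
  then show ?thesis
    by (simp add: samecomp_def[abs_def])
qed

lemma ex_samecomp_below_iff:
  assumes "0 < a"
  shows "(\<exists>r. 0 \<le> r \<and> r < a \<and> samecomp n d r i j) \<longleftrightarrow> samecomp n d (crit_pred n d a) i j"
proof
  assume "\<exists>r. 0 \<le> r \<and> r < a \<and> samecomp n d r i j"
  then obtain r where r: "0 \<le> r" "r < a" "samecomp n d r i j"
    by blast
  have "crit_floor n d r < a"
    using crit_floor(2)[OF r(1), where n = n and d = d] r(2) by linarith
  then have "crit_floor n d r \<le> crit_pred n d a"
    by (rule crit_pred(4)[OF assms crit_floor(1)[OF r(1)]])
  moreover have "samecomp n d (crit_floor n d r) i j"
    using r(3) by (simp add: samecomp_crit_floor[OF r(1)])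
  ultimately show "samecomp n d (crit_pred n d a) i j"
    by (rule samecomp_mono)
next
  assume "samecomp n d (crit_pred n d a) i j"
  then show "\<exists>r. 0 \<le> r \<and> r < a \<and> samecomp n d r i j"
    using crit_pred(2,3)[OF assms] by blast
qed

lemma ker_minus_eq_ker_plus_crit_pred:
  "0 < a \<Longrightarrow> ker_minus n d a = ker_plus n d (crit_pred n d a)"
  unfolding ker_minus_def ker_plus_def by (simp add: ex_samecomp_below_iff)

lemma ker_minus_eq_ker_plus_off_crit:
  assumes "0 \<le> t" "t \<notin> crit n d"
  shows "ker_minus n d t = ker_plus n d t"
proof -
  have "0 < t"
    using assms by (cases "t = 0") auto
  moreover have "{s \<in> crit n d. s < t} = {s \<in> crit n d. s \<le> t}"
    using assms(2) by (auto simp: le_less)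
  then have "crit_pred n d t = crit_floor n d t"
    by (simp add: crit_pred_def crit_floor_def)
  ultimately show ?thesis
    using assms(1) by (simp add: ker_minus_eq_ker_plus_crit_pred ker_plus_def samecomp_crit_floor)
qed

lemma ker_minus_subset_ker_plus: "0 \<le> a \<Longrightarrow> ker_minus n d a \<subseteq> ker_plus n d a"
proof (cases "a = 0")
  case True
  then show ?thesis
    by (simp add: ker_minus_def ker_plus_def spanZ2_eq_span chain.span_zero)
next
  case False
  moreover assume "0 \<le> a"
  ultimately have "0 < a"
    by simp
  then show ?thesis
    using crit_pred(2)[where a = a and n = n and d = d]
    by (simp add: ker_minus_eq_ker_plus_crit_pred ker_plus_mono)
qed

lemma ker_plus_subset_Max_crit: "ker_plus n d' r' \<subseteq> ker_plus n d (Max (crit n d))"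
  unfolding ker_plus_def spanZ2_eq_span
proof (intro chain.span_mono, safe)
  fix i j assume "samecomp n d' r' i j"
  then have "i \<in> {1..n}" "j \<in> {1..n}"
    by (auto simp: samecomp_def)
  moreover from this have "d i j \<le> Max (crit n d)"
    by (simp add: dist_in_crit)
  ultimately show "\<exists>i' j'. gen i + gen j = gen i' + gen j' \<and> samecomp n d (Max (crit n d)) i' j'"
    using samecomp_of_le by blast
qed

section \<open>Death values\<close>

lemma dead_crit_floor: "0 \<le> r \<Longrightarrow> dead n d (crit_floor n d r) = dead n d r"
  by (simp add: dead_def samecomp_crit_floor)

lemma death:
  assumes nonneg: "dist_nonneg n d"
    and j: "j \<in> {2..n}"
  shows "death n d j \<in> crit n d" "j \<in> dead n d (death n d j)"
    and "0 \<le> r \<Longrightarrow> j \<in> dead n d r \<Longrightarrow> death n d j \<le> r"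
proof -
  let ?S = "{s \<in> crit n d. j \<in> dead n d s}"
  have "j \<in> dead n d (d j 1)"
    using j samecomp_of_le[of j n 1 d "d j 1"] by (auto simp: dead_def)
  then have "d j 1 \<in> ?S"
    using j dist_in_crit[of j n 1 d] by simp
  then have min: "Min ?S \<in> ?S"
    by (intro Min_in) auto
  have below: "Min ?S \<le> r" if "0 \<le> r" "j \<in> dead n d r" for r
  proof -
    have "crit_floor n d r \<in> ?S"
      using that crit_floor(1) dead_crit_floor by simp
    then have "Min ?S \<le> crit_floor n d r"
      by simp
    then show ?thesis
      using crit_floor(2)[OF that(1), where n = n and d = d] by linarith
  qed
  have "(\<exists>i. 1 \<le> i \<and> i < j \<and> samecomp n d r j i) \<longleftrightarrow> j \<in> dead n d r" for r
    using j by (simp add: dead_def)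
  then have "death n d j = (LEAST r. 0 \<le> r \<and> j \<in> dead n d r)"
    by (simp add: death_def)
  also have "\<dots> = Min ?S"
    using min below crit_nonneg[OF nonneg] by (intro Least_equality) auto
  finally show "death n d j \<in> crit n d" "j \<in> dead n d (death n d j)"
    and "0 \<le> r \<Longrightarrow> j \<in> dead n d r \<Longrightarrow> death n d j \<le> r"
    using min below by auto
qed

lemma death_le_iff:
  assumes "dist_nonneg n d" "j \<in> {2..n}" "0 \<le> r"
  shows "death n d j \<le> r \<longleftrightarrow> j \<in> dead n d r"
  using death[OF assms(1,2)] dead_mono assms(3) by blast

lemma int_mult_eq_dim_ker_plus_minus:
  assumes sym: "dist_sym n d"
    and nonneg: "dist_nonneg n d"
    and "0 \<le> a"
  shows "int (mult n d a) = int (chain.dim (ker_plus n d a)) - int (chain.dim (ker_minus n d a))"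
proof (cases "a = 0")
  case True
  have "death n d j = 0 \<longleftrightarrow> j \<in> dead n d 0" if "j \<in> {2..n}" for j
  proof -
    have "0 \<le> death n d j"
      using death(1)[OF nonneg that] by (rule crit_nonneg[OF nonneg])
    then have "death n d j = 0 \<longleftrightarrow> death n d j \<le> 0"
      by auto
    then show ?thesis
      using death_le_iff[OF nonneg that order.refl] by simp
  qed
  then have "{j \<in> {2..n}. death n d j = a} = dead n d 0"
    using True by (auto simp: dead_def)
  then show ?thesis
    using True by (simp add: mult_def dim_ker_plus[OF sym] ker_minus_def)
next
  case False
  then have a: "0 < a"
    using assms(3) by simp
  let ?p = "crit_pred n d a"
  have "death n d j = a \<longleftrightarrow> j \<in> dead n d a - dead n d ?p" if "j \<in> {2..n}" for j
  proof -
    have "death n d j < a \<Longrightarrow> death n d j \<le> ?p"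
      using death(1)[OF nonneg that] by (rule crit_pred(4)[OF a])
    then have "death n d j = a \<longleftrightarrow> death n d j \<le> a \<and> \<not> death n d j \<le> ?p"
      using crit_pred(2)[OF a, where n = n and d = d] by fastforce
    then show ?thesis
      using death_le_iff[OF nonneg that] assms(3) crit_pred(3)[OF a] by simp
  qed
  then have "{j \<in> {2..n}. death n d j = a} = dead n d a - dead n d ?p"
    by (auto simp: dead_def)
  moreover have "dead n d ?p \<subseteq> dead n d a"
    using crit_pred(2)[OF a, where n = n and d = d] by (simp add: dead_mono)
  ultimately show ?thesis
    using a by (simp add: mult_def card_Diff_subset finite_dead card_mono of_nat_diff dim_ker_plus[OF sym]
        ker_minus_eq_ker_plus_crit_pred)
qed

section \<open>Row and column sums\<close>

lemma sum_telescope_pred: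
  fixes F :: "'a::linorder \<Rightarrow> 'b::ab_group_add"
  assumes "finite T" "T \<noteq> {}"
  shows "(\<Sum>t\<in>T. F t - (if {s \<in> T. s < t} = {} then c else F (Max {s \<in> T. s < t})))
    = F (Max T) - c"
  using assms
proof (induction T rule: finite_linorder_max_induct)
  case empty
  then show ?case by simp
next
  case (insert m T)
  let ?g = "\<lambda>U t. F t - (if {s \<in> U. s < t} = {} then c else F (Max {s \<in> U. s < t}))"
  have below: "{s \<in> insert m T. s < t} = {s \<in> T. s < t}" if "t \<in> T" for t
    using insert.hyps(2) that by force
  have sum_T: "(\<Sum>t\<in>T. ?g (insert m T) t) = (\<Sum>t\<in>T. ?g T t)"
    by (rule sum.cong[OF refl]) (simp only: below)
  have "m \<notin> T" and below_m: "{s \<in> insert m T. s < m} = T"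
    using insert.hyps(2) by auto
  have sum: "(\<Sum>t\<in>insert m T. ?g (insert m T) t) = ?g (insert m T) m + (\<Sum>t\<in>T. ?g T t)"
    by (simp only: sum.insert[OF insert.hyps(1) \<open>m \<notin> T\<close>] sum_T)
  show ?case
  proof (cases "T = {}")
    case True
    then show ?thesis by simp
  next
    case False
    have "Max (insert m T) = m"
      using insert.hyps by (intro Max_eqI) auto
    moreover have "?g (insert m T) m = F m - F (Max T)"
      unfolding below_m using False by simp
    ultimately show ?thesis
      using sum insert.IH[OF False] by simp
  qed
qed

lemma sum_dim_Int_ker_plus_minus:
  assumes nonneg: "dist_nonneg n d" and V: "chain.subspace V" "V \<subseteq> ker_plus n d' r'"
  shows "(\<Sum>t\<in>crit n d. int (chain.dim (V \<inter> ker_plus n d t)) - int (chain.dim (V \<inter> ker_minus n d t)))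
    = int (chain.dim V)"
proof -
  let ?F = "\<lambda>t. int (chain.dim (V \<inter> ker_plus n d t))"
  have minus: "int (chain.dim (V \<inter> ker_minus n d t))
      = (if {s \<in> crit n d. s < t} = {} then 0 else ?F (Max {s \<in> crit n d. s < t}))"
    if "t \<in> crit n d" for t
  proof (cases "t = 0")
    case True
    then have "{s \<in> crit n d. s < t} = {}"
      using crit_nonneg[OF nonneg] by force
    moreover have "V \<inter> ker_minus n d t = {0}"
      using True V(1) chain.subspace_0 by (auto simp: ker_minus_def)
    ultimately show ?thesis
      by simp
  next
    case False
    then have "0 < t"
      using crit_nonneg[OF nonneg that] by simp
    then have "0 \<in> {s \<in> crit n d. s < t}"
      by simp
    then show ?thesis
      using \<open>0 < t\<close> by (auto simp: ker_minus_eq_ker_plus_crit_pred crit_pred_def)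
  qed
  have top: "V \<inter> ker_plus n d (Max (crit n d)) = V"
    using V(2) ker_plus_subset_Max_crit by blast
  have "(\<Sum>t\<in>crit n d. ?F t - int (chain.dim (V \<inter> ker_minus n d t)))
      = (\<Sum>t\<in>crit n d. ?F t - (if {s \<in> crit n d. s < t} = {} then 0 else ?F (Max {s \<in> crit n d. s < t})))"
    by (rule sum.cong[OF refl]) (simp only: minus)
  also have "\<dots> = ?F (Max (crit n d)) - 0"
    by (rule sum_telescope_pred) (auto simp: crit_def)
  also have "\<dots> = int (chain.dim V)"
    using top by simp
  finally show ?thesis .
qed

lemma M0_row_sum:
  assumes symX: "dist_sym n dX" and nonnegX: "dist_nonneg n dX" and nonnegZ: "dist_nonneg n dZ"
    and a: "0 \<le> a"
  shows "finite {b. 0 \<le> b \<and> M0 n dX dZ a b \<noteq> 0}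
    \<and> (\<Sum>b\<in>{b. 0 \<le> b \<and> M0 n dX dZ a b \<noteq> 0}. M0 n dX dZ a b) = mult n dX a"
proof -
  let ?A = "ker_plus n dX a" and ?A' = "ker_minus n dX a"
  let ?g = "\<lambda>V t. int (chain.dim (V \<inter> ker_plus n dZ t)) - int (chain.dim (V \<inter> ker_minus n dZ t))"
  let ?S = "{b. 0 \<le> b \<and> M0 n dX dZ a b \<noteq> 0}"
  have A'A: "?A' \<subseteq> ?A"
    using a by (rule ker_minus_subset_ker_plus)
  have M0: "int (M0 n dX dZ a t) = ?g ?A t - ?g ?A' t" if "0 \<le> t" for t
    using quot_dim_span_Un_Int[OF finite_ker_plus subspace_ker_plus subspace_ker_minus subspace_ker_plus
        subspace_ker_minus A'A ker_minus_subset_ker_plus[OF that]]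
    by (simp add: M0_def)
  have "?S \<subseteq> crit n dZ"
    using M0 ker_minus_eq_ker_plus_off_crit by fastforce
  then have fin: "finite ?S"
    by (rule finite_subset) simp
  have "(\<Sum>b\<in>?S. M0 n dX dZ a b) = (\<Sum>b\<in>crit n dZ. M0 n dX dZ a b)"
    using \<open>?S \<subseteq> crit n dZ\<close> crit_nonneg[OF nonnegZ] by (intro sum.mono_neutral_left) auto
  then have "int (\<Sum>b\<in>?S. M0 n dX dZ a b) = (\<Sum>t\<in>crit n dZ. ?g ?A t - ?g ?A' t)"
    using M0 crit_nonneg[OF nonnegZ] by simp
  also have "\<dots> = (\<Sum>t\<in>crit n dZ. ?g ?A t) - (\<Sum>t\<in>crit n dZ. ?g ?A' t)"
    by (rule sum_subtractf)
  also have "\<dots> = int (chain.dim ?A) - int (chain.dim ?A')"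
    using sum_dim_Int_ker_plus_minus[OF nonnegZ subspace_ker_plus order.refl]
      sum_dim_Int_ker_plus_minus[OF nonnegZ subspace_ker_minus A'A] by simp
  also have "\<dots> = int (mult n dX a)"
    using int_mult_eq_dim_ker_plus_minus[OF symX nonnegX a] by simp
  finally have "(\<Sum>b\<in>?S. M0 n dX dZ a b) = mult n dX a"
    by (simp only: of_nat_eq_iff)
  with fin show ?thesis ..
qed

lemma M0_swap: "M0 n dX dZ a b = M0 n dZ dX b a"
  unfolding M0_def by (metis Int_commute sup_commute)

theorem lemma3:
  fixes n :: nat and dX dZ :: "nat \<Rightarrow> nat \<Rightarrow> real" and a b :: real
  assumes symX: "\<And>i j. i \<in> {1..n} \<Longrightarrow> j \<in> {1..n} \<Longrightarrow> dX i j = dX j i"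
      and nnX: "\<And>i j. i \<in> {1..n} \<Longrightarrow> j \<in> {1..n} \<Longrightarrow> 0 \<le> dX i j"
      and symZ: "\<And>i j. i \<in> {1..n} \<Longrightarrow> j \<in> {1..n} \<Longrightarrow> dZ i j = dZ j i"
      and nnZ: "\<And>i j. i \<in> {1..n} \<Longrightarrow> j \<in> {1..n} \<Longrightarrow> 0 \<le> dZ i j"
      and a: "0 \<le> a" and b: "0 \<le> b"
  shows "finite {b'. 0 \<le> b' \<and> M0 n dX dZ a b' \<noteq> 0}
       \<and> (\<Sum>b'\<in>{b'. 0 \<le> b' \<and> M0 n dX dZ a b' \<noteq> 0}. M0 n dX dZ a b') = mult n dX a
       \<and> finite {a'. 0 \<le> a' \<and> M0 n dX dZ a' b \<noteq> 0}
       \<and> (\<Sum>a'\<in>{a'. 0 \<le> a' \<and> M0 n dX dZ a' b \<noteq> 0}. M0 n dX dZ a' b) = mult n dZ b"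
proof -
  have "dist_sym n dX" "dist_sym n dZ" "dist_nonneg n dX" "dist_nonneg n dZ"
    using symX symZ nnX nnZ by (simp_all add: dist_sym_def dist_nonneg_def)
  then show ?thesis
    using M0_row_sum[of n dX dZ a] M0_row_sum[of n dZ dX b] a b by (simp add: M0_swap[of n dX dZ _ b])
qed

end
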